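(* Let $m=2h+1\geq 7$ be odd and let $f_2(x)=x^{3\cdot 2^{h+1}+4}+x^{2^{h+1}+2}+x^{2^{h+1}}\in\mathbb{F}_{2^m}[x]$. Let $s^\infty$ be the sequence $s_t=\operatorname{Tr}(f_2(\alpha^t+1))$, $t\ge0$. Then the binary cyclic code $\mathcal{C}_s$ has parameters $[2^m-1,\,2^m-2-3m,\,d(\mathcal{C}_s)]$ with $4\le d(\mathcal{C}_s)\le 8$, and generator polynomial $$g_s(x)=(x-1)\,m_{\alpha^{-3}}(x)\,m_{\alpha^{-(1+2^{h-1})}}(x)\,m_{\alpha^{-(1+2^{h-1}+2^h)}}(x).$$
   Context: Let $m\ge 1$, $v=2^m-1$, $\alpha$ a primitive element of $\mathbb{F}_{2^m}$, and $\operatorname{Tr}(x)=\sum_{i=0}^{m-1}x^{2^i}$ the absolute trace from $\mathbb{F}_{2^m}$ to $\mathbb{F}_2$. For a polynomial $F$ over $\mathbb{F}_{2^m}$ the binary sequence $s^\infty=(s_t)_{t\ge0}$ is defined by $s_t=\operatorname{Tr}(F(\alpha^t+1))$; it is periodic with period dividing $v$. Its minimal polynomial $g_s(x)$ is the polynomial $1+c_1x+\dots+c_Lx^L\in\mathbb{F}_2[x]$ of least degree $L$ such that $s_i+c_1s_{i-1}+\dots+c_Ls_{i-L}=0$ for all $i\ge L$; its degree $L_s$ is the linear span of $s^\infty$. $\mathcal{C}_s$ denotes the binary cyclic code of length $v$ with generator polynomial $g_s(x)$ (so $\dim\mathcal{C}_s=v-L_s$). For an integer $i$, $m_{\alpha^i}(x)$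 is the minimal polynomial of $\alpha^i$ over $\mathbb{F}_2$. $d(\mathcal{C})$ denotes minimum Hamming distance. *)

theory Defs
  imports "HOL-Library.Z2" "HOL-Computational_Algebra.Polynomial"
begin

(* Binary field F_2 is the library type bit.  The field F_{2^m} is a finite field type 'a
   with CARD('a) = 2^m. *)

definition bit_to :: "bit \<Rightarrow> 'a::ring_1" where
  "bit_to b = (if b = 0 then 0 else 1)"

(* absolute trace F_{2^m} -> F_2 (values lie in the prime field {0,1} of 'a) *)
definition trace :: "nat \<Rightarrow> 'a::field \<Rightarrow> 'a" where
  "trace m x = (\<Sum>i<m. x ^ (2 ^ i))"

definition primitive_elem :: "'a::{finite,field} \<Rightarrow> bool" where
  "primitive_elem \<alpha> \<longleftrightarrow> \<alpha> \<noteq> 0 \<and> (\<forall>x::'a. x \<noteq> 0 \<longrightarrow> (\<exists>k::nat. x = \<alpha> ^ k))"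

definition trace_seq :: "nat \<Rightarrow> ('a::field \<Rightarrow> 'a) \<Rightarrow> 'a \<Rightarrow> nat \<Rightarrow> bit" where
  "trace_seq m F \<alpha> t = (if trace m (F (\<alpha> ^ t + 1)) = 0 then 0 else 1)"

definition annihilates :: "bit poly \<Rightarrow> (nat \<Rightarrow> bit) \<Rightarrow> bool" where
  "annihilates g s \<longleftrightarrow> coeff g 0 = 1 \<and>
     (\<forall>i\<ge>degree g. (\<Sum>j\<le>degree g. coeff g j * s (i - j)) = 0)"

definition is_seq_min_poly :: "(nat \<Rightarrow> bit) \<Rightarrow> bit poly \<Rightarrow> bool" where
  "is_seq_min_poly s g \<longleftrightarrow> annihilates g s \<and>
     (\<forall>g'. annihilates g' s \<longrightarrow> degree g \<le> degree g')"

definition seq_min_poly :: "(nat \<Rightarrow> bit) \<Rightarrow> bit poly" where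
  "seq_min_poly s = (THE g. is_seq_min_poly s g)"

definition linear_span :: "(nat \<Rightarrow> bit) \<Rightarrow> nat" where
  "linear_span s = degree (seq_min_poly s)"

definition is_min_poly_F2 :: "'a::field \<Rightarrow> bit poly \<Rightarrow> bool" where
  "is_min_poly_F2 \<beta> p \<longleftrightarrow> lead_coeff p = 1 \<and> poly (map_poly bit_to p) \<beta> = 0 \<and>
     (\<forall>q. q \<noteq> 0 \<longrightarrow> poly (map_poly bit_to q) \<beta> = 0 \<longrightarrow> degree p \<le> degree q)"

definition min_poly_F2 :: "'a::field \<Rightarrow> bit poly" where
  "min_poly_F2 \<beta> = (THE p. is_min_poly_F2 \<beta> p)"

definition cyclic_code :: "nat \<Rightarrow> bit poly \<Rightarrow> bit poly set" where
  "cyclic_code n g = {c. degree c < n \<and> g dvd c}"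

definition hamming_weight :: "bit poly \<Rightarrow> nat" where
  "hamming_weight c = card {i. coeff c i \<noteq> 0}"

definition min_distance :: "bit poly set \<Rightarrow> nat" where
  "min_distance C = Min {hamming_weight c | c. c \<in> C \<and> c \<noteq> 0}"

definition code_dim :: "bit poly set \<Rightarrow> nat" where
  "code_dim C = (THE k. card C = 2 ^ k)"

definition f2 :: "nat \<Rightarrow> 'a::field \<Rightarrow> 'a" where
  "f2 h x = x ^ (3 * 2 ^ (h + 1) + 4) + x ^ (2 ^ (h + 1) + 2) + x ^ (2 ^ (h + 1))"

end

theory Submission
  imports Defs "HOL-Computational_Algebra.Primes" "HOL-Library.Nat_Bijection" "HOL-Number_Theory.Cong"
begin

(* In characteristic two, with Y = y^(2^(h+1)),
     f2(y + 1) = (Y + 1)^3 (y^4 + 1) + (Y + 1)(y^2 + 1) + (Y + 1),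
   and after discarding a term w^2 + w of trace zero the sequence becomes
     s_t = 1 + Tr(alpha^(3t)) + Tr(alpha^(e t)) + Tr(alpha^(e' t)),  e = 1 + 2^(h-1), e' = e + 2^h,
   that is, s_t is the sum of gamma^t over the set P consisting of 1 and the cyclotomic cosets of
   3, e and e'. The binary digits of these exponents lie in {0..h}, less than half of the
   m = 2h + 1 positions, so no cyclic rotation maps one digit pattern onto another: the three
   cosets are disjoint, have m elements each and miss 1, whence |P| = 3m + 1.
   A binary polynomial g annihilates such a power sum iff g(0) = 1 and g vanishes at gamma^-1 for
   all gamma in P, so g_s is the product of x - 1 and the minimal polynomials of alpha^-3,
   alpha^-e, alpha^-e', of degree 3m + 1.
   Every word of C_s has even weight since x - 1 divides g_s, and no word has weight two since
   alpha^-3 has order 2^m - 1 (3 is prime to 2^m - 1 for odd m); hence d >= 4. Among the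
   binom(2^m - 1, 4) > 2^(3m+1) words of weight four, two have the same residue modulo g_s, and
   their difference is a codeword of weight at most 8. *)

section \<open>Characteristic two and binary polynomials\<close>

lemma two_eq_zero_if_CHAR_2:
  assumes "CHAR('a::semiring_1) = 2"
  shows "(2::'a) = 0"
  by (metis assms of_nat_CHAR of_nat_numeral)

lemma frobenius_add:
  assumes "CHAR('a::comm_semiring_1) = 2"
  shows "(x + y :: 'a) ^ 2 ^ k = x ^ 2 ^ k + y ^ 2 ^ k"
  by (rule freshmans_dream') (simp_all add: assms)

lemma frobenius_sum:
  assumes "CHAR('a::comm_semiring_1) = 2"
  shows "(\<Sum>i\<in>A. f i :: 'a) ^ 2 ^ k = (\<Sum>i\<in>A. f i ^ 2 ^ k)"
  by (rule freshmans_dream_sum') (simp_all add: assms)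

lemma power_2_power_Suc: "(x::'a::monoid_mult) ^ 2 ^ Suc k = (x ^ 2 ^ k) ^ 2"
  by (simp only: power_Suc2 power_mult)

lemma bit_to_0 [simp]: "bit_to 0 = 0"
  and bit_to_1 [simp]: "bit_to 1 = 1"
  by (simp_all add: bit_to_def)

lemma bit_to_eq_0_iff [simp]: "(bit_to b :: 'a::ring_1) = 0 \<longleftrightarrow> b = 0"
  by (cases b) simp_all

lemma bit_to_mult: "(bit_to (a * b) :: 'a::ring_1) = bit_to a * bit_to b"
  by (cases a; cases b) simp_all

lemma bit_to_add:
  assumes "CHAR('a::ring_1) = 2"
  shows "(bit_to (a + b) :: 'a) = bit_to a + bit_to b"
  using two_eq_zero_if_CHAR_2[OF assms] by (cases a; cases b) simp_all

lemma bit_to_diff: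
  assumes "CHAR('a::ring_1) = 2"
  shows "(bit_to (a - b) :: 'a) = bit_to a + bit_to b"
  using two_eq_zero_if_CHAR_2[OF assms] by (cases a; cases b) simp_all

lemma bit_to_sum:
  assumes "CHAR('a::ring_1) = 2"
  shows "(bit_to (\<Sum>i\<in>A. f i) :: 'a) = (\<Sum>i\<in>A. bit_to (f i))"
proof (induction A rule: infinite_finite_induct)
  case (insert x F)
  then show ?case
    by (simp only: sum.insert[OF insert.hyps] bit_to_add[OF assms])
qed simp_all

lemma coeff_map_poly_bit_to [simp]: "coeff (map_poly bit_to p) n = bit_to (coeff p n)"
  by (simp add: coeff_map_poly)

lemma degree_map_poly_bit_to [simp]:
  "degree (map_poly (bit_to :: bit \<Rightarrow> 'a::ring_1) p) = degree p"
  by (rule degree_map_poly) simp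

lemma map_poly_bit_to_eq_0_iff [simp]:
  "map_poly (bit_to :: bit \<Rightarrow> 'a::ring_1) p = 0 \<longleftrightarrow> p = 0"
  by (rule map_poly_eq_0_iff) simp_all

lemma map_poly_bit_to_diff:
  assumes "CHAR('a::comm_ring_1) = 2"
  shows "map_poly (bit_to :: bit \<Rightarrow> 'a) (p - q) = map_poly bit_to p - map_poly bit_to q"
  by (rule poly_eqI) (simp only: coeff_diff coeff_map_poly_bit_to bit_to_diff[OF assms] minus_CHAR_2[OF assms])

lemma map_poly_bit_to_mult:
  assumes "CHAR('a::comm_ring_1) = 2"
  shows "map_poly (bit_to :: bit \<Rightarrow> 'a) (p * q) = map_poly bit_to p * map_poly bit_to q"
  by (rule poly_eqI) (simp only: coeff_map_poly_bit_to coeff_mult bit_to_sum[OF assms] bit_to_mult)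

lemma poly_map_poly_bit_to:
  "poly (map_poly (bit_to :: bit \<Rightarrow> 'a::comm_ring_1) p) x = (\<Sum>i | coeff p i \<noteq> 0. x ^ i)"
proof -
  have "poly (map_poly bit_to p) x = (\<Sum>i\<le>degree p. (bit_to (coeff p i) :: 'a) * x ^ i)"
    by (simp add: poly_altdef)
  also have "\<dots> = (\<Sum>i | coeff p i \<noteq> 0. bit_to (coeff p i) * x ^ i)"
    by (rule sum.mono_neutral_right) (auto intro: le_degree)
  also have "\<dots> = (\<Sum>i | coeff p i \<noteq> 0. x ^ i)"
    by (rule sum.cong) simp_all
  finally show ?thesis .
qed

lemma poly_map_poly_bit_to_frobenius:
  assumes "CHAR('a::comm_ring_1) = 2"
  shows "poly (map_poly (bit_to :: bit \<Rightarrow> 'a) p) (x ^ 2 ^ k) = poly (map_poly bit_to p) x ^ 2 ^ k"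
  by (simp add: poly_map_poly_bit_to frobenius_sum[OF assms] flip: power_mult)
    (simp add: mult.commute)

lemma card_poly_degree_less:
  assumes "finite (UNIV :: 'a set)" and "0 < k"
  shows "finite {p::'a::zero poly. degree p < k}"
    and "card {p::'a poly. degree p < k} = card (UNIV :: 'a set) ^ k"
proof -
  let ?L = "{xs::'a list. set xs \<subseteq> UNIV \<and> length xs = k}"
  have "degree (Poly xs) < k" if "length xs = k" for xs :: "'a list"
  proof -
    have "degree (Poly xs) \<le> k - 1"
      by (rule degree_le) (auto simp: that nth_default_def)
    then show ?thesis
      using assms(2) by linarith
  qed
  moreover have "p \<in> Poly ` ?L" if "degree p < k" for p :: "'a poly"
  proof
    show "p = Poly (map (coeff p) [0..<k])"
      by (rule poly_eqI) (use that in \<open>auto simp: nth_default_def coeff_eq_0\<close>)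
  qed simp
  ultimately have image: "{p::'a poly. degree p < k} = Poly ` ?L"
    by auto
  have "inj_on Poly ?L"
  proof (rule inj_onI)
    fix xs ys :: "'a list"
    assume "xs \<in> ?L" "ys \<in> ?L" "Poly xs = Poly ys"
    then have "nth_default 0 xs i = nth_default 0 ys i" for i
      by (metis coeff_Poly_eq)
    with \<open>xs \<in> ?L\<close> \<open>ys \<in> ?L\<close> show "xs = ys"
      by (intro nth_equalityI) (simp_all, metis nth_default_nth)
  qed
  moreover have "finite ?L" "card ?L = card (UNIV :: 'a set) ^ k"
    by (rule finite_lists_length_eq card_lists_length_eq, rule assms(1))+
  ultimately show "finite {p::'a poly. degree p < k}"
    and "card {p::'a poly. degree p < k} = card (UNIV :: 'a set) ^ k"
    unfolding image by (simp_all only: finite_imageI card_image)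
qed

lemma UNIV_bit: "(UNIV :: bit set) = {0, 1}"
  by (auto simp: bit_not_zero_iff)

lemma finite_UNIV_bit: "finite (UNIV :: bit set)"
  and card_UNIV_bit: "card (UNIV :: bit set) = 2"
  by (simp_all add: UNIV_bit)

lemma poly_map_poly_bit_to_dvd_root:
  assumes "CHAR('a::comm_ring_1) = 2" and "p dvd q" and "poly (map_poly bit_to p) (x::'a) = 0"
  shows "poly (map_poly bit_to q) x = 0"
  using assms by (auto simp: map_poly_bit_to_mult[OF assms(1)] elim!: dvdE)

lemma poly_map_poly_bit_to_x_plus_1: "poly (map_poly bit_to [:-1, 1:]) (x::'a::comm_ring_1) = x + 1"
  by (simp add: map_poly_pCons add.commute)

section \<open>The field with \<open>2 ^ m\<close> elements\<close>

locale binary_field =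
  fixes m :: nat and \<alpha> :: "'a::{finite,field}" and n :: nat
  assumes card_UNIV: "card (UNIV :: 'a set) = 2 ^ m"
    and primitive: "primitive_elem \<alpha>"
    and n_def: "n = 2 ^ m - 1"
begin

lemma alpha_nonzero: "\<alpha> \<noteq> 0"
  using primitive by (simp add: primitive_elem_def)

lemma m_pos: "0 < m"
proof -
  have "card {0, 1::'a} \<le> card (UNIV :: 'a set)"
    by (rule card_mono) simp_all
  then show ?thesis
    using card_UNIV by (cases m) auto
qed

lemma odd_n: "odd n"
  using m_pos by (simp add: n_def)

lemma n_pos: "0 < n"
  using odd_n by (rule odd_pos)

lemma card_nonzero_elements: "card (UNIV - {0::'a}) = n"
  by (simp add: card_Diff_subset card_UNIV n_def)

lemma power_n_eq_1:
  assumes "x \<noteq> 0"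
  shows "x ^ n = (1::'a)"
proof -
  let ?U = "UNIV - {0::'a}"
  have "bij_betw (\<lambda>y. x * y) ?U ?U"
    by (rule bij_betw_byWitness[where f' = "\<lambda>y. y / x"]) (use assms in auto)
  then have "(\<Prod>y\<in>?U. x * y) = (\<Prod>y\<in>?U. y)"
    by (rule prod.reindex_bij_betw)
  then have "x ^ n * (\<Prod>y\<in>?U. y) = 1 * (\<Prod>y\<in>?U. y)"
    by (simp add: prod.distrib card_nonzero_elements)
  then show ?thesis
    by (subst (asm) mult_cancel_right) simp
qed

lemma frobenius_power_m: "x ^ 2 ^ m = (x::'a)"
proof (cases "x = 0")
  case False
  have "2 ^ m = Suc n"
    by (simp add: n_def)
  with False show ?thesis
    by (simp add: power_n_eq_1)
qed (simp add: m_pos)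

lemma alpha_power_mod: "\<alpha> ^ (k mod n) = \<alpha> ^ k"
proof -
  have "\<alpha> ^ k = (\<alpha> ^ n) ^ (k div n) * \<alpha> ^ (k mod n)"
    by (simp only: power_mult [symmetric] power_add [symmetric] mult_div_mod_eq)
  then show ?thesis
    by (simp add: power_n_eq_1 alpha_nonzero)
qed

lemma alpha_powers: "(\<lambda>k. \<alpha> ^ k) ` {..<n} = UNIV - {0}"
proof
  show "UNIV - {0} \<subseteq> (\<lambda>k. \<alpha> ^ k) ` {..<n}"
  proof
    fix x :: 'a
    assume "x \<in> UNIV - {0}"
    then obtain k where "x = \<alpha> ^ k"
      using primitive by (auto simp: primitive_elem_def)
    then have "x = \<alpha> ^ (k mod n)"
      by (simp add: alpha_power_mod)
    then show "x \<in> (\<lambda>k. \<alpha> ^ k) ` {..<n}"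
      using n_pos by auto
  qed
qed (use alpha_nonzero in auto)

lemma alpha_power_eq_iff: "\<alpha> ^ a = \<alpha> ^ b \<longleftrightarrow> [a = b] (mod n)"
proof -
  have "inj_on (\<lambda>k. \<alpha> ^ k) {..<n}"
    by (rule eq_card_imp_inj_on) (simp_all add: alpha_powers card_nonzero_elements)
  then have "\<alpha> ^ (a mod n) = \<alpha> ^ (b mod n) \<longleftrightarrow> a mod n = b mod n"
    using n_pos by (auto dest: inj_onD)
  then show ?thesis
    by (simp add: alpha_power_mod cong_def)
qed

lemma alpha_power_eq_1_iff: "\<alpha> ^ a = 1 \<longleftrightarrow> n dvd a"
  using alpha_power_eq_iff[of a 0] by (simp add: cong_0_iff)

lemma inverse_alpha_power_power_neq_1:
  assumes "coprime e n" "0 < k" "k < n"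
  shows "inverse (\<alpha> ^ e) ^ k \<noteq> 1"
proof
  assume "inverse (\<alpha> ^ e) ^ k = 1"
  then have "\<alpha> ^ (e * k) = 1"
    by (simp add: power_mult power_inverse)
  then have "n dvd k"
    using assms(1) by (simp add: alpha_power_eq_1_iff coprime_commute coprime_dvd_mult_right_iff)
  then show False
    using assms(2,3) by (auto dest: dvd_imp_le)
qed

text \<open>Writing \<open>-1 = \<alpha> ^ k\<close>, squaring shows that \<open>n\<close> divides \<open>2 k\<close>, hence \<open>k\<close>
  since \<open>n\<close> is odd.\<close>
lemma CHAR_eq_2: "CHAR('a) = 2"
proof (rule CHAR_eq_posI)
  have "\<exists>k. (-1::'a) = \<alpha> ^ k"
    using primitive by (simp add: primitive_elem_def)
  then obtain k where k: "-1 = \<alpha> ^ k" ..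
  then have "\<alpha> ^ (k * 2) = 1"
    by (metis power_mult neg_one_even_power even_numeral)
  then have "n dvd k * 2"
    by (simp add: alpha_power_eq_1_iff)
  then have "n dvd k"
    using odd_n by (simp add: coprime_dvd_mult_left_iff)
  then have "-1 = (1::'a)"
    by (simp add: k alpha_power_eq_1_iff)
  then have "(1::'a) + 1 = 0"
    by (metis add.right_inverse)
  then show "of_nat 2 = (0::'a)"
    by simp
qed (auto simp: less_2_cases_iff)

lemma two_eq_zero: "(2::'a) = 0"
  by (rule two_eq_zero_if_CHAR_2[OF CHAR_eq_2])

lemma trace_add: "trace m (x + y) = trace m x + trace m (y::'a)"
  by (simp add: trace_def frobenius_add[OF CHAR_eq_2] sum.distrib)

lemma trace_square: "trace m (x ^ 2) = trace m (x::'a)"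
proof -
  have "x + (\<Sum>i<m. x ^ 2 ^ Suc i) = (\<Sum>i<Suc m. x ^ 2 ^ i)"
    by (simp only: sum.lessThan_Suc_shift power_0 power_one_right)
  also have "\<dots> = trace m x + x"
    by (simp add: trace_def frobenius_power_m)
  finally show ?thesis
    by (simp add: trace_def power_2_power_Suc flip: power_mult)
qed

lemma trace_power_2_power: "trace m (x ^ 2 ^ k) = trace m (x::'a)"
  by (induction k) (simp_all only: power_2_power_Suc trace_square power_0 power_one_right)

lemma trace_square_add_self: "trace m (z ^ 2 + z) = (0::'a)"
  by (simp add: trace_add trace_square two_eq_zero flip: mult_2)

lemma trace_eq_0_or_1: "trace m (x::'a) = 0 \<or> trace m x = 1"
proof -
  have "trace m x ^ 2 ^ 1 = (\<Sum>i<m. (x ^ 2 ^ i) ^ 2 ^ 1)"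
    unfolding trace_def by (rule frobenius_sum[OF CHAR_eq_2])
  also have "\<dots> = trace m (x ^ 2 ^ 1)"
    by (simp add: trace_def mult.commute flip: power_mult)
  finally have "trace m x ^ 2 = trace m x"
    by (simp only: power_one_right trace_square)
  then have "trace m x * (trace m x - 1) = 0"
    by (simp add: power2_eq_square algebra_simps)
  then show ?thesis
    by simp
qed

lemma trace_one: "trace m (1::'a) = of_nat m"
  by (simp add: trace_def)

lemma bit_to_trace_seq: "bit_to (trace_seq m F \<alpha> t) = trace m (F (\<alpha> ^ t + 1))"
  using trace_eq_0_or_1[of "F (\<alpha> ^ t + 1)"] by (auto simp: trace_seq_def)

lemma exists_annihilating_poly:
  "\<exists>p::bit poly. p \<noteq> 0 \<and> degree p \<le> m \<and> poly (map_poly bit_to p) (\<beta>::'a) = 0"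
proof -
  let ?D = "{p::bit poly. degree p < Suc m}"
  let ?eval = "\<lambda>p. poly (map_poly (bit_to :: bit \<Rightarrow> 'a) p) \<beta>"
  have "\<not> inj_on ?eval ?D"
  proof
    assume "inj_on ?eval ?D"
    then have "card ?D \<le> card (UNIV :: 'a set)"
      by (rule card_inj_on_le) simp_all
    then show False
      using card_poly_degree_less[where 'a = bit, of "Suc m"]
      by (simp add: card_UNIV finite_UNIV_bit card_UNIV_bit)
  qed
  then obtain p q where "p \<in> ?D" "q \<in> ?D" "p \<noteq> q" "?eval p = ?eval q"
    unfolding inj_on_def by blast
  then show ?thesis
    using degree_diff_le_max[of p q]
    by (intro exI[of _ "p - q"]) (simp add: map_poly_bit_to_diff[OF CHAR_eq_2])
qed

lemma is_min_poly_F2_unique: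
  assumes "is_min_poly_F2 (\<beta>::'a) p" "is_min_poly_F2 \<beta> q"
  shows "p = q"
proof (rule ccontr)
  assume "p \<noteq> q"
  have "p \<noteq> 0" "q \<noteq> 0"
    using assms by (auto simp: is_min_poly_F2_def)
  moreover from this have "degree p = degree q"
    using assms by (meson antisym is_min_poly_F2_def)
  moreover have "poly (map_poly bit_to (p - q)) \<beta> = 0"
    using assms by (simp add: map_poly_bit_to_diff[OF CHAR_eq_2] is_min_poly_F2_def)
  ultimately have "degree p \<le> degree (p - q)"
    using assms(1) \<open>p \<noteq> q\<close> by (simp add: is_min_poly_F2_def)
  moreover have "degree (p - q) < degree p"
  proof -
    have "degree (p - q) \<le> degree p"
      using degree_diff_le_max[of p q] \<open>degree p = degree q\<close> by simp
    moreover have "coeff (p - q) (degree p) = 0"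
      using assms \<open>degree p = degree q\<close> by (simp add: is_min_poly_F2_def)
    ultimately show ?thesis
      using \<open>p \<noteq> q\<close> by (metis le_neq_implies_less leading_coeff_0_iff right_minus_eq)
  qed
  ultimately show False
    by simp
qed

lemma min_poly_F2: "is_min_poly_F2 (\<beta>::'a) (min_poly_F2 \<beta>)"
  and degree_min_poly_F2: "degree (min_poly_F2 \<beta>) \<le> m"
proof -
  obtain q :: "bit poly" where q: "q \<noteq> 0" "degree q \<le> m" "poly (map_poly bit_to q) \<beta> = 0"
    using exists_annihilating_poly by blast
  let ?A = "\<lambda>p::bit poly. p \<noteq> 0 \<and> poly (map_poly bit_to p) \<beta> = 0"
  obtain p where p: "?A p" "\<And>p'. ?A p' \<Longrightarrow> degree p \<le> degree p'"
    using ex_has_least_nat[of ?A q degree] q by blast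
  then have "lead_coeff p = 1"
    by (metis bit_not_zero_iff leading_coeff_0_iff)
  with p have "is_min_poly_F2 \<beta> p"
    by (auto simp: is_min_poly_F2_def)
  moreover from this have "min_poly_F2 \<beta> = p"
    unfolding min_poly_F2_def by (blast intro: is_min_poly_F2_unique)
  ultimately show "is_min_poly_F2 \<beta> (min_poly_F2 \<beta>)" "degree (min_poly_F2 \<beta>) \<le> m"
    using p(2)[of q] q by auto
qed

lemma min_poly_F2_nonzero: "min_poly_F2 (\<beta>::'a) \<noteq> 0"
  using min_poly_F2[of \<beta>] by (auto simp: is_min_poly_F2_def)

lemma min_poly_F2_root: "poly (map_poly bit_to (min_poly_F2 \<beta>)) ((\<beta>::'a) ^ 2 ^ k) = 0"
  using min_poly_F2[of \<beta>]
  by (simp add: poly_map_poly_bit_to_frobenius[OF CHAR_eq_2] is_min_poly_F2_def)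

lemma coeff_0_min_poly_F2:
  assumes "(\<beta>::'a) \<noteq> 0"
  shows "coeff (min_poly_F2 \<beta>) 0 = 1"
proof (rule ccontr)
  assume "coeff (min_poly_F2 \<beta>) 0 \<noteq> 1"
  then obtain r where r: "min_poly_F2 \<beta> = pCons 0 r"
    by (cases "min_poly_F2 \<beta>") auto
  then have "r \<noteq> 0"
    using min_poly_F2_nonzero[of \<beta>] by auto
  have "\<beta> * poly (map_poly bit_to r) \<beta> = 0"
    using min_poly_F2_root[of \<beta> 0] r by (simp add: map_poly_pCons)
  then have "degree (min_poly_F2 \<beta>) \<le> degree r"
    using min_poly_F2[of \<beta>] \<open>r \<noteq> 0\<close> assms by (simp add: is_min_poly_F2_def)
  then show False
    using r \<open>r \<noteq> 0\<close> by simp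
qed

end

section \<open>Sequences of power sums of roots of unity\<close>

lemma card_le_degree_if_roots:
  fixes p :: "'a::idom poly"
  assumes "p \<noteq> 0" and "\<And>x. x \<in> A \<Longrightarrow> poly p x = 0"
  shows "card A \<le> degree p"
proof -
  have "card A \<le> card {x. poly p x = 0}"
    using assms by (intro card_mono poly_roots_finite) auto
  also have "\<dots> \<le> degree p"
    using assms(1) by (rule card_poly_roots_bound)
  finally show ?thesis .
qed

locale power_sum_seq =
  fixes n :: nat and P :: "'a::field set" and s :: "nat \<Rightarrow> bit"
  assumes CHAR_2: "CHAR('a) = 2"
    and odd_n: "odd n"
    and finite_P: "finite P"
    and roots_of_unity: "\<And>\<gamma>. \<gamma> \<in> P \<Longrightarrow> \<gamma> ^ n = 1"
    and power_sum: "\<And>t. bit_to (s t) = (\<Sum>\<gamma>\<in>P. \<gamma> ^ t)"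
begin

lemma P_nonzero: "\<gamma> \<in> P \<Longrightarrow> \<gamma> \<noteq> 0"
  using roots_of_unity odd_n by (metis odd_pos power_0_left zero_neq_one not_gr0)

lemma sum_powers_root_of_unity:
  assumes "\<zeta> ^ n = (1::'a)"
  shows "(\<Sum>t<n. \<zeta> ^ t) = (if \<zeta> = 1 then 1 else 0)"
proof (cases "\<zeta> = 1")
  case True
  obtain k where "n = Suc (2 * k)"
    using odd_n oddE by fastforce
  then show ?thesis
    using True two_eq_zero_if_CHAR_2[OF CHAR_2] by simp
next
  case False
  then show ?thesis
    using geometric_sum[OF False, of n] assms by simp
qed

text \<open>Orthogonality: weighting the \<open>t\<close>-th equation by \<open>\<delta> ^ -t\<close> and summing
  over a period isolates the coefficient of \<open>\<delta>\<close>.\<close>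
lemma power_sum_coeff_eq_0:
  assumes zero: "\<And>t. (\<Sum>\<gamma>\<in>P. \<gamma> ^ t * c \<gamma>) = 0" and "\<delta> \<in> P"
  shows "c \<delta> = 0"
proof -
  have "0 = (\<Sum>t<n. inverse \<delta> ^ t * (\<Sum>\<gamma>\<in>P. \<gamma> ^ t * c \<gamma>))"
    by (simp add: zero)
  also have "\<dots> = (\<Sum>\<gamma>\<in>P. c \<gamma> * (\<Sum>t<n. (\<gamma> * inverse \<delta>) ^ t))"
    by (simp add: sum_distrib_left power_mult_distrib mult_ac sum.swap[of _ "{..<n}"])
  also have "\<dots> = (\<Sum>\<gamma>\<in>P. if \<gamma> = \<delta> then c \<gamma> else 0)"
  proof (rule sum.cong [OF refl])
    fix \<gamma>
    assume "\<gamma> \<in> P"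
    have "(\<gamma> * inverse \<delta>) ^ n = 1"
      using \<open>\<gamma> \<in> P\<close> \<open>\<delta> \<in> P\<close> by (simp add: power_mult_distrib power_inverse roots_of_unity)
    moreover have "\<gamma> * inverse \<delta> = 1 \<longleftrightarrow> \<gamma> = \<delta>"
      using P_nonzero[OF \<open>\<delta> \<in> P\<close>] by (simp add: field_simps)
    ultimately show "c \<gamma> * (\<Sum>t<n. (\<gamma> * inverse \<delta>) ^ t) = (if \<gamma> = \<delta> then c \<gamma> else 0)"
      by (simp add: sum_powers_root_of_unity)
  qed
  also have "\<dots> = c \<delta>"
    using \<open>\<delta> \<in> P\<close> finite_P by simp
  finally show ?thesis ..
qed

lemma bit_to_recurrence:
  assumes "degree g \<le> i"
  shows "(bit_to (\<Sum>j\<le>degree g. coeff g j * s (i - j)) :: 'a)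
           = (\<Sum>\<gamma>\<in>P. \<gamma> ^ i * poly (map_poly bit_to g) (inverse \<gamma>))"
proof -
  have shift: "\<gamma> ^ (i - j) = \<gamma> ^ i * inverse \<gamma> ^ j" if "\<gamma> \<in> P" "j \<le> degree g" for \<gamma> j
    using P_nonzero[OF \<open>\<gamma> \<in> P\<close>] \<open>j \<le> degree g\<close> assms
    by (simp add: power_diff power_inverse divide_inverse)
  have "(bit_to (\<Sum>j\<le>degree g. coeff g j * s (i - j)) :: 'a)
      = (\<Sum>j\<le>degree g. bit_to (coeff g j) * (\<Sum>\<gamma>\<in>P. \<gamma> ^ (i - j)))"
    by (simp only: bit_to_sum[OF CHAR_2] bit_to_mult power_sum)
  also have "\<dots> = (\<Sum>\<gamma>\<in>P. \<Sum>j\<le>degree g. bit_to (coeff g j) * \<gamma> ^ (i - j))"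
    by (simp add: sum_distrib_left sum.swap[of _ P])
  also have "\<dots> = (\<Sum>\<gamma>\<in>P. \<gamma> ^ i * (\<Sum>j\<le>degree g. bit_to (coeff g j) * inverse \<gamma> ^ j))"
    by (intro sum.cong refl) (simp add: shift sum_distrib_left mult.left_commute)
  also have "\<dots> = (\<Sum>\<gamma>\<in>P. \<gamma> ^ i * poly (map_poly bit_to g) (inverse \<gamma>))"
    by (simp add: poly_altdef)
  finally show ?thesis .
qed

text \<open>Since \<open>s\<close> has period \<open>n\<close>, the instances of the recurrence for
  \<open>i \<ge> degree g\<close> already cover every residue of \<open>i\<close> modulo \<open>n\<close>, so
  \<open>power_sum_coeff_eq_0\<close> applies.\<close>
lemma annihilates_iff:
  "annihilates g s \<longleftrightarrow>
     coeff g 0 = 1 \<and> (\<forall>\<gamma>\<in>P. poly (map_poly bit_to g) (inverse \<gamma>) = (0::'a))"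
proof
  assume "annihilates g s"
  have "(\<Sum>\<gamma>\<in>P. \<gamma> ^ t * poly (map_poly bit_to g) (inverse \<gamma>)) = (0::'a)" for t
  proof -
    have "degree g \<le> t + n * degree g"
      using odd_pos[OF odd_n] by (simp add: trans_le_add2)
    moreover from this have "(\<Sum>j\<le>degree g. coeff g j * s (t + n * degree g - j)) = 0"
      using \<open>annihilates g s\<close> unfolding annihilates_def by blast
    ultimately have "(\<Sum>\<gamma>\<in>P. \<gamma> ^ (t + n * degree g) * poly (map_poly bit_to g) (inverse \<gamma>)) = (0::'a)"
      using bit_to_recurrence by (metis bit_to_0)
    then show ?thesis
      by (simp add: power_add power_mult roots_of_unity cong: sum.cong)
  qed
  then have "\<forall>\<gamma>\<in>P. poly (map_poly bit_to g) (inverse \<gamma>) = (0::'a)"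
    using power_sum_coeff_eq_0[where c = "\<lambda>\<gamma>. poly (map_poly bit_to g) (inverse \<gamma>)"] by blast
  moreover have "coeff g 0 = 1"
    using \<open>annihilates g s\<close> unfolding annihilates_def by blast
  ultimately show "coeff g 0 = 1 \<and> (\<forall>\<gamma>\<in>P. poly (map_poly bit_to g) (inverse \<gamma>) = (0::'a))"
    by blast
next
  assume roots: "coeff g 0 = 1 \<and> (\<forall>\<gamma>\<in>P. poly (map_poly bit_to g) (inverse \<gamma>) = (0::'a))"
  have "(\<Sum>j\<le>degree g. coeff g j * s (i - j)) = 0" if "degree g \<le> i" for i
  proof -
    have "(bit_to (\<Sum>j\<le>degree g. coeff g j * s (i - j)) :: 'a) = 0"
      unfolding bit_to_recurrence[OF that] using roots by simp
    then show ?thesis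
      by (simp only: bit_to_eq_0_iff)
  qed
  with roots show "annihilates g s"
    unfolding annihilates_def by blast
qed

lemma card_le_degree_if_annihilates:
  assumes "annihilates g s"
  shows "card P \<le> degree g"
proof -
  have "card (inverse ` P) \<le> degree (map_poly (bit_to :: bit \<Rightarrow> 'a) g)"
    using assms by (intro card_le_degree_if_roots) (auto simp: annihilates_iff)
  then show ?thesis
    by (simp add: card_image inj_on_def)
qed

text \<open>The difference of two such annihilators vanishes at \<open>0\<close> and at the
  \<open>card P\<close> points \<open>\<gamma> ^ -1\<close>.\<close>
lemma annihilator_unique:
  assumes "annihilates g s" "annihilates g' s" "degree g \<le> card P" "degree g' \<le> card P"
  shows "g = g'"
proof (rule ccontr)
  let ?r = "map_poly (bit_to :: bit \<Rightarrow> 'a) (g - g')"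
  assume "g \<noteq> g'"
  then have "?r \<noteq> 0"
    by simp
  moreover have "poly ?r x = 0" if "x \<in> insert 0 (inverse ` P)" for x
  proof -
    have "poly (map_poly bit_to g) x = (poly (map_poly bit_to g') x :: 'a)"
      using assms(1,2) that by (auto simp: annihilates_iff poly_0_coeff_0)
    then show ?thesis
      by (simp add: map_poly_bit_to_diff[OF CHAR_2])
  qed
  ultimately have "card (insert 0 (inverse ` P)) \<le> degree ?r"
    by (rule card_le_degree_if_roots)
  moreover have "card (insert 0 (inverse ` P)) = Suc (card P)"
  proof -
    have "0 \<notin> inverse ` P"
      using P_nonzero by auto
    then show ?thesis
      using finite_P by (simp add: card_image inj_on_def)
  qed
  moreover have "degree ?r \<le> card P"
    using degree_diff_le_max[of g g'] assms(3,4) by simp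
  ultimately show False
    by simp
qed

lemma seq_min_poly_eqI:
  assumes "annihilates g s" "degree g \<le> card P"
  shows "seq_min_poly s = g"
proof -
  have "is_seq_min_poly s g"
    using assms card_le_degree_if_annihilates unfolding is_seq_min_poly_def by (meson le_trans)
  moreover have "g' = g" if "is_seq_min_poly s g'" for g'
    using that \<open>is_seq_min_poly s g\<close> assms annihilator_unique
    unfolding is_seq_min_poly_def by (meson le_trans)
  ultimately show ?thesis
    unfolding seq_min_poly_def by (rule the_equality)
qed

end

section \<open>Rotations of binary digit patterns\<close>

text \<open>A set \<open>B \<subseteq> {..<m}\<close> stands for the binary digits of \<open>set_encode B\<close>;
  multiplying by \<open>2 ^ d\<close> modulo \<open>2 ^ m - 1\<close> rotates these digits by \<open>d\<close> places.\<close>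
definition cyclic_shift :: "nat \<Rightarrow> nat \<Rightarrow> nat set \<Rightarrow> nat set" where
  "cyclic_shift m d B = (\<lambda>p. (p + d) mod m) ` B"

lemma inj_on_cyclic_shift: "inj_on (\<lambda>p::nat. (p + d) mod m) {..<m}"
proof (rule inj_onI)
  fix p q
  assume "p \<in> {..<m}" "q \<in> {..<m}" "(p + d) mod m = (q + d) mod m"
  then have "[p = q] (mod m)"
    by (simp flip: cong_def add: cong_add_rcancel_nat)
  with \<open>p \<in> {..<m}\<close> \<open>q \<in> {..<m}\<close> show "p = q"
    by (simp add: cong_def)
qed

lemma cyclic_shift_0: "B \<subseteq> {..<m} \<Longrightarrow> cyclic_shift m 0 B = B"
  by (simp add: cyclic_shift_def subset_iff cong: image_cong)

lemma cyclic_shift_subset: "0 < m \<Longrightarrow> cyclic_shift m d B \<subseteq> {..<m}"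
  by (auto simp: cyclic_shift_def)

lemma two_power_cong_mod: "[2 ^ x = 2 ^ (x mod m)] (mod 2 ^ m - 1 :: nat)"
proof -
  have "[2 ^ m = 1] (mod 2 ^ m - 1 :: nat)"
    by (simp add: cong_altdef_nat)
  then have "[(2 ^ m) ^ (x div m) * 2 ^ (x mod m) = 1 ^ (x div m) * 2 ^ (x mod m)] (mod 2 ^ m - 1 :: nat)"
    by (intro cong_mult cong_pow cong_refl)
  moreover have "(2::nat) ^ x = (2 ^ m) ^ (x div m) * 2 ^ (x mod m)"
    by (simp only: power_mult [symmetric] power_add [symmetric] mult_div_mod_eq)
  ultimately show ?thesis
    by simp
qed

lemma set_encode_mult_two_power_cong:
  assumes "0 < m" "B \<subseteq> {..<m}"
  shows "[set_encode B * 2 ^ d = set_encode (cyclic_shift m d B)] (mod 2 ^ m - 1)"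
proof -
  have "finite B"
    using assms(2) finite_subset by blast
  have "set_encode B * 2 ^ d = (\<Sum>p\<in>B. 2 ^ (p + d) :: nat)"
    by (simp add: set_encode_def sum_distrib_right power_add)
  moreover have "[(\<Sum>p\<in>B. 2 ^ (p + d)) = (\<Sum>p\<in>B. 2 ^ ((p + d) mod m))] (mod 2 ^ m - 1 :: nat)"
    by (intro cong_sum two_power_cong_mod)
  moreover have "(\<Sum>p\<in>B. 2 ^ ((p + d) mod m)) = set_encode (cyclic_shift m d B)"
    using inj_on_subset[OF inj_on_cyclic_shift assms(2)]
    by (simp add: set_encode_def cyclic_shift_def sum.reindex)
  ultimately show ?thesis
    by simp
qed

lemma set_encode_less_mask:
  assumes "B \<subseteq> {..<m}" "B \<noteq> {..<m}"
  shows "set_encode B < 2 ^ m - 1"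
proof -
  have "set_encode {..<m} = (\<Sum>p\<in>{..<m} - B. 2 ^ p) + set_encode B"
    unfolding set_encode_def by (rule sum.subset_diff[OF assms(1)]) simp
  moreover have "(\<Sum>p\<in>{..<m} - B. 2 ^ p) > (0::nat)"
    using assms by (intro sum_pos) auto
  moreover have "set_encode {..<m} = 2 ^ m - 1"
    using mask_eq_sum_exp_nat[of m] by (simp add: set_encode_def lessThan_def)
  ultimately show ?thesis
    by simp
qed

lemma cyclic_shift_short_pattern:
  assumes "2 * h < m" and "0 \<in> B" "B \<subseteq> {..h}" and "0 \<in> B'" "B' \<subseteq> {..h}"
    and "d < m" "cyclic_shift m d B = B'"
  shows "d = 0"
proof -
  have "d \<in> B'"
    using assms(2,6,7) by (force simp: cyclic_shift_def)
  then have "d \<le> h"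
    using assms(5) by auto
  obtain p where "p \<in> B" "(p + d) mod m = 0"
    using assms(4,7) by (auto simp: cyclic_shift_def)
  moreover from this have "p + d < m"
    using assms(1,3) \<open>d \<le> h\<close> by auto
  ultimately show "d = 0"
    by simp
qed

lemma set_encode_cyclic_shift_less_mask:
  assumes "2 * h < m" "0 < h" "B \<subseteq> {..h}"
  shows "set_encode (cyclic_shift m d B) < 2 ^ m - 1"
proof (rule set_encode_less_mask)
  show "cyclic_shift m d B \<subseteq> {..<m}"
    using assms(1) by (intro cyclic_shift_subset) simp
  have "card (cyclic_shift m d B) \<le> card B"
    unfolding cyclic_shift_def by (rule card_image_le) (use assms(3) finite_subset in blast)
  also have "\<dots> \<le> card {..h}"
    using assms(3) by (intro card_mono) simp_all
  also have "\<dots> = Suc h"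
    by simp
  also have "\<dots> < m"
    using assms(1,2) by linarith
  finally have "card (cyclic_shift m d B) < m" .
  then show "cyclic_shift m d B \<noteq> {..<m}"
    by (metis card_lessThan less_irrefl)
qed

lemma short_pattern_shift_cong:
  assumes "2 * h < m" "0 < h" and B: "0 \<in> B" "B \<subseteq> {..h}" and B': "0 \<in> B'" "B' \<subseteq> {..h}"
    and "d < m" and cong: "[set_encode B * 2 ^ d = set_encode B'] (mod 2 ^ m - 1)"
  shows "d = 0 \<and> B = B'"
proof -
  have "B \<subseteq> {..<m}" "B' \<subseteq> {..<m}"
    using assms(1) B(2) B'(2) by auto
  have "[set_encode (cyclic_shift m d B) = set_encode B'] (mod 2 ^ m - 1)"
    using cong_trans[OF cong_sym[OF set_encode_mult_two_power_cong] cong] \<open>B \<subseteq> {..<m}\<close> assms(7)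
    by simp
  moreover have "set_encode B' < 2 ^ m - 1"
    using set_encode_cyclic_shift_less_mask[OF assms(1,2) B'(2), of 0]
    by (simp add: cyclic_shift_0[OF \<open>B' \<subseteq> {..<m}\<close>])
  ultimately have "set_encode (cyclic_shift m d B) = set_encode B'"
    using set_encode_cyclic_shift_less_mask[OF assms(1,2) B(2)]
    by (simp add: cong_less_modulus_unique_nat)
  moreover have "finite (cyclic_shift m d B)" "finite B'"
    using \<open>B \<subseteq> {..<m}\<close> \<open>B' \<subseteq> {..<m}\<close> by (simp_all add: cyclic_shift_def finite_subset)
  ultimately have "cyclic_shift m d B = B'"
    by (simp add: set_encode_eq)
  moreover from this have "d = 0"
    by (rule cyclic_shift_short_pattern[OF assms(1) B B' \<open>d < m\<close>])
  ultimately show ?thesis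
    using cyclic_shift_0[OF \<open>B \<subseteq> {..<m}\<close>] by simp
qed

lemma short_pattern_cong_unique:
  assumes "2 * h < m" "0 < h" and B: "0 \<in> B" "B \<subseteq> {..h}" and B': "0 \<in> B'" "B' \<subseteq> {..h}"
    and "i < m" "j < m" and cong: "[set_encode B * 2 ^ i = set_encode B' * 2 ^ j] (mod 2 ^ m - 1)"
  shows "B = B' \<and> i = j"
proof -
  have ordered: "C = C' \<and> k = l"
    if C: "0 \<in> C" "C \<subseteq> {..h}" and C': "0 \<in> C'" "C' \<subseteq> {..h}" and "l \<le> k" "k < m"
      and "[set_encode C * 2 ^ k = set_encode C' * 2 ^ l] (mod 2 ^ m - 1)" for C C' k l
  proof -
    have "coprime (2 ^ l) (2 ^ m - 1 :: nat)"
      using assms(1) by (simp add: coprime_power_left_iff)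
    moreover have "[set_encode C * 2 ^ (k - l) * 2 ^ l = set_encode C' * 2 ^ l] (mod 2 ^ m - 1)"
      using that(5,7) by (simp add: mult.assoc flip: power_add)
    ultimately have "[set_encode C * 2 ^ (k - l) = set_encode C'] (mod 2 ^ m - 1)"
      by (simp add: cong_mult_rcancel_nat)
    moreover have "k - l < m"
      using that(6) by linarith
    ultimately have "k - l = 0 \<and> C = C'"
      by (intro short_pattern_shift_cong[OF assms(1,2) C C'])
    then show ?thesis
      using that(5) by simp
  qed
  show ?thesis
  proof (cases "j \<le> i")
    case True
    then show ?thesis
      using ordered[OF B B' _ \<open>i < m\<close> cong] by blast
  next
    case False
    then show ?thesis
      using ordered[OF B' B _ \<open>j < m\<close> cong_sym[OF cong]] by simp
  qed
qed

lemma short_pattern_not_dvd: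
  assumes "2 * h < m" "0 < h" "0 \<in> B" "B \<subseteq> {..h}"
  shows "\<not> (2 ^ m - 1) dvd set_encode B * 2 ^ i"
proof
  assume "(2 ^ m - 1) dvd set_encode B * 2 ^ i"
  moreover have "B \<subseteq> {..<m}"
    using assms(4) by (rule order_trans) (use assms(1) in auto)
  moreover have "[set_encode B * 2 ^ i = set_encode (cyclic_shift m i B)] (mod 2 ^ m - 1)"
    using assms(1) \<open>B \<subseteq> {..<m}\<close> by (intro set_encode_mult_two_power_cong) simp_all
  ultimately have "(2 ^ m - 1) dvd set_encode (cyclic_shift m i B)"
    using cong_dvd_iff by blast
  moreover have "set_encode (cyclic_shift m i B) < 2 ^ m - 1"
    using assms(1,2,4) by (rule set_encode_cyclic_shift_less_mask)
  moreover have "0 < set_encode (cyclic_shift m i B)"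
  proof -
    have "finite (cyclic_shift m i B)" "cyclic_shift m i B \<noteq> {}"
      using finite_subset[OF \<open>B \<subseteq> {..<m}\<close>] assms(3) by (auto simp: cyclic_shift_def)
    then show ?thesis
      using set_encode_eq[of _ "{}"] by (metis finite.emptyI gr0I set_encode_empty)
  qed
  ultimately show False
    by (simp add: nat_dvd_not_less)
qed

section \<open>The trace sequence of \<open>f\<^sub>2\<close>\<close>

context binary_field
begin

definition conjugates :: "nat \<Rightarrow> 'a set" where
  "conjugates e = (\<lambda>i. \<alpha> ^ (e * 2 ^ i)) ` {..<m}"

lemma finite_conjugates [simp]: "finite (conjugates e)"
  by (simp add: conjugates_def)

lemma trace_alpha_power:
  assumes "inj_on (\<lambda>i. \<alpha> ^ (e * 2 ^ i)) {..<m}"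
  shows "trace m ((\<alpha> ^ t) ^ e) = (\<Sum>\<gamma>\<in>conjugates e. \<gamma> ^ t)"
proof -
  have "trace m ((\<alpha> ^ t) ^ e) = (\<Sum>i<m. (\<alpha> ^ (e * 2 ^ i)) ^ t)"
    unfolding trace_def by (intro sum.cong) (simp_all add: mult_ac flip: power_mult)
  also have "\<dots> = (\<Sum>\<gamma>\<in>conjugates e. \<gamma> ^ t)"
    unfolding conjugates_def by (rule sum.reindex [OF assms, symmetric, unfolded comp_def])
  finally show ?thesis .
qed

lemma conjugates_power_n: "\<gamma> \<in> conjugates e \<Longrightarrow> \<gamma> ^ n = 1"
  by (auto simp: conjugates_def power_n_eq_1 alpha_nonzero)

lemma min_poly_F2_conjugates_root:
  assumes "\<gamma> \<in> conjugates e"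
  shows "poly (map_poly bit_to (min_poly_F2 (inverse (\<alpha> ^ e)))) (inverse \<gamma>) = 0"
proof -
  obtain i where "\<gamma> = \<alpha> ^ (e * 2 ^ i)"
    using assms by (auto simp: conjugates_def)
  then have "inverse \<gamma> = inverse (\<alpha> ^ e) ^ 2 ^ i"
    by (simp add: power_mult power_inverse)
  then show ?thesis
    by (simp add: min_poly_F2_root)
qed

lemma short_pattern_conjugates:
  assumes "2 * h < m" "0 < h" "0 \<in> B" "B \<subseteq> {..h}"
  shows "inj_on (\<lambda>i. \<alpha> ^ (set_encode B * 2 ^ i)) {..<m}"
    and "card (conjugates (set_encode B)) = m"
    and "1 \<notin> conjugates (set_encode B)"
proof -
  show inj: "inj_on (\<lambda>i. \<alpha> ^ (set_encode B * 2 ^ i)) {..<m}"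
    using short_pattern_cong_unique[OF assms(1,2) assms(3,4) assms(3,4)]
    by (intro inj_onI) (simp add: alpha_power_eq_iff n_def)
  then show "card (conjugates (set_encode B)) = m"
    by (simp add: conjugates_def card_image)
  show "1 \<notin> conjugates (set_encode B)"
    using short_pattern_not_dvd[OF assms] by (auto simp: conjugates_def alpha_power_eq_1_iff n_def)
qed

lemma short_pattern_conjugates_disjoint:
  assumes "2 * h < m" "0 < h" "0 \<in> B" "B \<subseteq> {..h}" "0 \<in> B'" "B' \<subseteq> {..h}" "B \<noteq> B'"
  shows "conjugates (set_encode B) \<inter> conjugates (set_encode B') = {}"
  using short_pattern_cong_unique[OF assms(1-6)] assms(7)
  by (auto simp: conjugates_def alpha_power_eq_iff n_def)

lemma short_patterns_conjugates:
  assumes "2 * h < m" "0 < h" "finite \<B>" and patterns: "\<And>B. B \<in> \<B> \<Longrightarrow> 0 \<in> B \<and> B \<subseteq> {..h}"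
  defines "C \<equiv> \<Union>B\<in>\<B>. conjugates (set_encode B)"
  shows "card C = card \<B> * m" and "1 \<notin> C"
    and "(\<Sum>\<gamma>\<in>C. \<gamma> ^ t) = (\<Sum>B\<in>\<B>. trace m ((\<alpha> ^ t) ^ set_encode B))"
proof -
  note conj = short_pattern_conjugates[OF assms(1,2)]
  have disjoint: "\<forall>B\<in>\<B>. \<forall>B'\<in>\<B>. B \<noteq> B' \<longrightarrow>
      conjugates (set_encode B) \<inter> conjugates (set_encode B') = {}"
    using short_pattern_conjugates_disjoint[OF assms(1,2)] patterns by blast
  show "card C = card \<B> * m"
    unfolding C_def using assms(3) disjoint conj(2) patterns by (simp add: card_UN_disjoint)
  show "1 \<notin> C"
    unfolding C_def using conj(3) patterns by blast
  show "(\<Sum>\<gamma>\<in>C. \<gamma> ^ t) = (\<Sum>B\<in>\<B>. trace m ((\<alpha> ^ t) ^ set_encode B))"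
    unfolding C_def using assms(3) disjoint conj(1) patterns
    by (simp add: sum.UNION_disjoint trace_alpha_power)
qed

lemma trace_f2_shift:
  fixes y :: 'a
  assumes "m = 2 * h + 1" "0 < h"
  shows "trace m (f2 h (y + 1)) = 1 + trace m (y ^ 3) + trace m (y ^ (1 + 2 ^ (h - 1)))
           + trace m (y ^ (1 + 2 ^ (h - 1) + 2 ^ h))"
proof -
  define Y where "Y = y ^ 2 ^ (h + 1)"
  define w where "w = Y * y ^ 2 + y ^ 2 + Y"
  have frob: "(y + 1) ^ 2 ^ j = y ^ 2 ^ j + 1" for j
    using frobenius_add[OF CHAR_eq_2, of y 1 j] by simp
  have "f2 h (y + 1) = ((y + 1) ^ 2 ^ (h + 1)) ^ 3 * (y + 1) ^ 2 ^ 2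
      + (y + 1) ^ 2 ^ (h + 1) * (y + 1) ^ 2 ^ 1 + (y + 1) ^ 2 ^ (h + 1)"
    by (simp add: f2_def mult.commute add.commute flip: power_mult power_add)
  also have "\<dots> = (Y + 1) ^ 3 * (y ^ 4 + 1) + (Y + 1) * (y ^ 2 + 1) + (Y + 1)"
    unfolding frob Y_def by simp
  also have "\<dots> = (Y ^ 3 * y ^ 4 + Y ^ 3 + Y * y ^ 4 + 1) + (w ^ 2 + w)
      + 2 * (Y ^ 2 * y ^ 4 + Y ^ 2 + 2 * Y + 1 - Y ^ 2 * y ^ 2 - Y * y ^ 2)"
    unfolding w_def by algebra
  finally have "trace m (f2 h (y + 1)) = trace m (Y ^ 3 * y ^ 4 + Y ^ 3 + Y * y ^ 4 + 1)"
    by (simp add: two_eq_zero trace_add [of _ "w ^ 2 + w"] trace_square_add_self)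
  then have "trace m (f2 h (y + 1))
      = trace m (Y ^ 3 * y ^ 4) + trace m (Y ^ 3) + trace m (Y * y ^ 4) + trace m 1"
    by (simp only: trace_add)
  moreover have "Y ^ 3 * y ^ 4 = (y ^ (1 + 2 ^ (h - 1) + 2 ^ h)) ^ 2 ^ 2"
    "Y ^ 3 = (y ^ 3) ^ 2 ^ (h + 1)" "Y * y ^ 4 = (y ^ (1 + 2 ^ (h - 1))) ^ 2 ^ 2"
    using \<open>0 < h\<close> by (cases h; simp add: Y_def algebra_simps flip: power_mult power_add)+
  moreover have "trace m (1::'a) = 2 * of_nat h + 1"
    by (subst trace_one) (simp add: assms(1))
  ultimately have "trace m (f2 h (y + 1)) = trace m ((y ^ (1 + 2 ^ (h - 1) + 2 ^ h)) ^ 2 ^ 2)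
      + trace m ((y ^ 3) ^ 2 ^ (h + 1)) + trace m ((y ^ (1 + 2 ^ (h - 1))) ^ 2 ^ 2) + 1"
    by (simp add: two_eq_zero)
  then show ?thesis
    by (simp only: trace_power_2_power add_ac)
qed

lemma trace_seq_f2_power_sum:
  assumes "m = 2 * h + 1" "3 \<le> h"
  defines "P \<equiv> insert 1 (conjugates 3 \<union> conjugates (1 + 2 ^ (h - 1))
                         \<union> conjugates (1 + 2 ^ (h - 1) + 2 ^ h))"
  shows "power_sum_seq n P (trace_seq m (f2 h) \<alpha>)" and "card P = 3 * m + 1"
proof -
  define B\<^sub>1 B\<^sub>2 B\<^sub>3 :: "nat set" where "B\<^sub>1 = {0, 1}" and "B\<^sub>2 = {0, h - 1}" and "B\<^sub>3 = {0, h - 1, h}"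
  have "2 * h < m" "0 < h"
    using assms(1,2) by simp_all
  have "1 \<in> B\<^sub>1" "1 \<notin> B\<^sub>2" "1 \<notin> B\<^sub>3" "h \<notin> B\<^sub>2" "h \<in> B\<^sub>3"
    using assms(2) by (simp_all add: B\<^sub>1_def B\<^sub>2_def B\<^sub>3_def)
  then have distinct: "B\<^sub>1 \<noteq> B\<^sub>2" "B\<^sub>1 \<noteq> B\<^sub>3" "B\<^sub>2 \<noteq> B\<^sub>3"
    by blast+
  have "set_encode B\<^sub>1 = 3"
    by (simp add: B\<^sub>1_def)
  moreover have "set_encode B\<^sub>2 = 1 + 2 ^ (h - 1)"
    unfolding B\<^sub>2_def using assms(2) by (subst set_encode_insert) auto
  moreover have "set_encode B\<^sub>3 = 1 + 2 ^ (h - 1) + 2 ^ h"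
    unfolding B\<^sub>3_def using assms(2)
    by (subst set_encode_insert, simp, simp) (subst set_encode_insert; simp)
  ultimately have P: "P = insert 1 (\<Union>B\<in>{B\<^sub>1, B\<^sub>2, B\<^sub>3}. conjugates (set_encode B))"
    by (simp add: P_def Un_assoc)
  have patterns: "0 \<in> B \<and> B \<subseteq> {..h}" if "B \<in> {B\<^sub>1, B\<^sub>2, B\<^sub>3}" for B
    using that \<open>0 < h\<close> by (auto simp: B\<^sub>1_def B\<^sub>2_def B\<^sub>3_def)
  have "finite {B\<^sub>1, B\<^sub>2, B\<^sub>3}"
    by simp
  note C = short_patterns_conjugates[OF \<open>2 * h < m\<close> \<open>0 < h\<close> this patterns]
  have "card P = Suc (card (\<Union>B\<in>{B\<^sub>1, B\<^sub>2, B\<^sub>3}. conjugates (set_encode B)))"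
    unfolding P by (rule card_insert_disjoint[OF _ C(2)]) simp
  then show "card P = 3 * m + 1"
    using C(1) distinct by simp
  have "bit_to (trace_seq m (f2 h) \<alpha> t) = (\<Sum>\<gamma>\<in>P. \<gamma> ^ t)" for t
  proof -
    have "(\<Sum>\<gamma>\<in>P. \<gamma> ^ t) = 1 + (\<Sum>\<gamma>\<in>(\<Union>B\<in>{B\<^sub>1, B\<^sub>2, B\<^sub>3}. conjugates (set_encode B)). \<gamma> ^ t)"
      unfolding P by (subst sum.insert[OF _ C(2)]) simp_all
    also have "\<dots> = 1 + (\<Sum>B\<in>{B\<^sub>1, B\<^sub>2, B\<^sub>3}. trace m ((\<alpha> ^ t) ^ set_encode B))"
      by (simp only: C(3))
    also have "\<dots> = bit_to (trace_seq m (f2 h) \<alpha> t)"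
      using trace_f2_shift[OF assms(1) \<open>0 < h\<close>, of "\<alpha> ^ t"] distinct
        \<open>set_encode B\<^sub>1 = 3\<close> \<open>set_encode B\<^sub>2 = _\<close> \<open>set_encode B\<^sub>3 = _\<close>
      by (simp add: bit_to_trace_seq add_ac)
    finally show ?thesis ..
  qed
  moreover have "\<gamma> ^ n = 1" if "\<gamma> \<in> P" for \<gamma>
    using that conjugates_power_n by (auto simp: P_def)
  ultimately show "power_sum_seq n P (trace_seq m (f2 h) \<alpha>)"
    by unfold_locales (simp_all add: CHAR_eq_2 odd_n P)
qed

lemma annihilates_generator:
  assumes "power_sum_seq n P s"
    and "P \<subseteq> insert 1 (conjugates e\<^sub>1 \<union> conjugates e\<^sub>2 \<union> conjugates e\<^sub>3)"
  shows "annihilates ([:-1, 1:] * min_poly_F2 (inverse (\<alpha> ^ e\<^sub>1))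
           * min_poly_F2 (inverse (\<alpha> ^ e\<^sub>2)) * min_poly_F2 (inverse (\<alpha> ^ e\<^sub>3))) s"
    (is "annihilates ?G s")
proof -
  interpret power_sum_seq n P s
    by fact
  have "coeff ?G 0 = 1"
    using alpha_nonzero by (simp add: coeff_mult_0 coeff_0_min_poly_F2)
  moreover have "poly (map_poly bit_to ?G) (inverse \<gamma>) = 0" if "\<gamma> \<in> P" for \<gamma>
  proof -
    have factors: "poly (map_poly bit_to ?G) x = (x + 1)
        * poly (map_poly bit_to (min_poly_F2 (inverse (\<alpha> ^ e\<^sub>1)))) x
        * poly (map_poly bit_to (min_poly_F2 (inverse (\<alpha> ^ e\<^sub>2)))) x
        * poly (map_poly bit_to (min_poly_F2 (inverse (\<alpha> ^ e\<^sub>3)))) x" for x :: 'a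
      by (simp only: map_poly_bit_to_mult[OF CHAR_eq_2] poly_mult poly_map_poly_bit_to_x_plus_1)
    consider "\<gamma> = 1" | "\<gamma> \<in> conjugates e\<^sub>1" | "\<gamma> \<in> conjugates e\<^sub>2" | "\<gamma> \<in> conjugates e\<^sub>3"
      using \<open>\<gamma> \<in> P\<close> assms(2) by blast
    then show ?thesis
    proof cases
      case 1
      then show ?thesis
        unfolding factors by (simp add: two_eq_zero)
    qed (simp_all only: factors min_poly_F2_conjugates_root mult_zero_left mult_zero_right)
  qed
  ultimately show ?thesis
    by (simp add: annihilates_iff)
qed

lemma degree_generator_le:
  "degree ([:-1, 1::bit:] * min_poly_F2 (inverse (\<alpha> ^ e\<^sub>1))
     * min_poly_F2 (inverse (\<alpha> ^ e\<^sub>2)) * min_poly_F2 (inverse (\<alpha> ^ e\<^sub>3))) \<le> 3 * m + 1"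
proof -
  have "degree ([:-1, 1::bit:] * min_poly_F2 (inverse (\<alpha> ^ e\<^sub>1))
      * min_poly_F2 (inverse (\<alpha> ^ e\<^sub>2)) * min_poly_F2 (inverse (\<alpha> ^ e\<^sub>3)))
    \<le> degree [:-1, 1::bit:] + degree (min_poly_F2 (inverse (\<alpha> ^ e\<^sub>1)))
      + degree (min_poly_F2 (inverse (\<alpha> ^ e\<^sub>2))) + degree (min_poly_F2 (inverse (\<alpha> ^ e\<^sub>3)))"
    by (intro degree_mult_le[THEN order_trans] add_mono order_refl)
  also have "\<dots> \<le> 1 + m + m + m"
    by (intro add_mono degree_min_poly_F2) simp
  finally show ?thesis
    by simp
qed

lemma seq_min_poly_trace_seq_f2:
  assumes "m = 2 * h + 1" "3 \<le> h"
  defines "G \<equiv> [:-1, 1:] * min_poly_F2 (inverse (\<alpha> ^ 3))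
                 * min_poly_F2 (inverse (\<alpha> ^ (1 + 2 ^ (h - 1))))
                 * min_poly_F2 (inverse (\<alpha> ^ (1 + 2 ^ (h - 1) + 2 ^ h)))"
  shows "seq_min_poly (trace_seq m (f2 h) \<alpha>) = G" and "degree G = 3 * m + 1"
proof -
  define P where "P = insert 1 (conjugates 3 \<union> conjugates (1 + 2 ^ (h - 1))
                                \<union> conjugates (1 + 2 ^ (h - 1) + 2 ^ h))"
  note P = trace_seq_f2_power_sum[OF assms(1,2), folded P_def]
  interpret power_sum_seq n P "trace_seq m (f2 h) \<alpha>"
    by (rule P(1))
  have annihilates: "annihilates G (trace_seq m (f2 h) \<alpha>)"
    unfolding G_def using P(1) by (rule annihilates_generator) (simp add: P_def)
  moreover have "degree G \<le> 3 * m + 1"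
    unfolding G_def by (rule degree_generator_le)
  ultimately show "seq_min_poly (trace_seq m (f2 h) \<alpha>) = G" and "degree G = 3 * m + 1"
    using seq_min_poly_eqI card_le_degree_if_annihilates P(2) by (simp_all add: le_antisym)
qed

end

section \<open>Binary cyclic codes\<close>

lemma cyclic_code_eq_image:
  assumes "G \<noteq> 0" "degree G < n"
  shows "cyclic_code n G = (\<lambda>q. G * q) ` {q. degree q < n - degree G}"
proof (intro set_eqI iffI)
  fix c
  assume "c \<in> cyclic_code n G"
  then obtain q where "c = G * q" "degree c < n"
    by (auto simp: cyclic_code_def elim: dvdE)
  moreover have "degree q < n - degree G"
    using calculation assms by (cases "q = 0") (simp_all add: degree_mult_eq)
  ultimately show "c \<in> (\<lambda>q. G * q) ` {q. degree q < n - degree G}"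
    by blast
next
  fix c
  assume "c \<in> (\<lambda>q. G * q) ` {q. degree q < n - degree G}"
  then obtain q where "c = G * q" "degree q < n - degree G"
    by blast
  then show "c \<in> cyclic_code n G"
    using degree_mult_le[of G q] by (auto simp: cyclic_code_def)
qed

lemma finite_cyclic_code:
  assumes "G \<noteq> 0" "degree G < n"
  shows "finite (cyclic_code n G)"
    and "card (cyclic_code n G) = 2 ^ (n - degree G)"
proof -
  have "inj_on (\<lambda>q. G * q) {q. degree q < n - degree G}"
    using assms(1) by (auto intro: inj_onI)
  then show "finite (cyclic_code n G)" "card (cyclic_code n G) = 2 ^ (n - degree G)"
    using card_poly_degree_less[where 'a = bit, OF finite_UNIV_bit, of "n - degree G"] assms
    by (simp_all add: cyclic_code_eq_image card_image card_UNIV_bit)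
qed

lemma code_dim_cyclic_code:
  assumes "G \<noteq> 0" "degree G < n"
  shows "code_dim (cyclic_code n G) = n - degree G"
  unfolding code_dim_def finite_cyclic_code(2)[OF assms]
  by (rule the_equality) (simp_all add: power_inject_exp)

lemma min_distance_bounds:
  assumes "finite C" and "\<exists>c\<in>C. c \<noteq> 0 \<and> hamming_weight c \<le> b"
    and "\<And>c. c \<in> C \<Longrightarrow> c \<noteq> 0 \<Longrightarrow> a \<le> hamming_weight c"
  shows "a \<le> min_distance C \<and> min_distance C \<le> b"
proof -
  let ?W = "{hamming_weight c | c. c \<in> C \<and> c \<noteq> 0}"
  have "finite ?W"
    using assms(1) by simp
  moreover have "?W \<noteq> {}"
    using assms(2) by blast
  ultimately show ?thesis
    using assms(2,3) unfolding min_distance_def by (auto simp: Min_le_iff Min_ge_iff)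
qed

lemma hamming_weight_pos:
  assumes "c \<noteq> 0"
  shows "0 < hamming_weight c"
proof -
  have "{i. coeff c i \<noteq> 0} \<subseteq> {..degree c}"
    by (auto intro: le_degree)
  then have "finite {i. coeff c i \<noteq> 0}"
    by (rule finite_subset) simp
  moreover have "degree c \<in> {i. coeff c i \<noteq> 0}"
    using assms by (simp only: mem_Collect_eq leading_coeff_0_iff not_False_eq_True)
  ultimately show ?thesis
    unfolding hamming_weight_def by (auto simp: card_gt_0_iff)
qed

lemma poly_1_eq_hamming_weight: "poly c (1::bit) = of_nat (hamming_weight c)"
  using poly_map_poly_bit_to[of c "1::bit"]
  by (simp add: hamming_weight_def map_poly_idI bit_to_def)

lemma even_hamming_weight:
  assumes "[:-1, 1:] dvd c"
  shows "even (hamming_weight c)"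
proof -
  have "(of_nat (hamming_weight c) :: bit) = 0"
    using assms by (simp add: poly_eq_0_iff_dvd flip: poly_1_eq_hamming_weight)
  then show ?thesis
    by (metis dvd_0_right even_of_nat_iff)
qed

text \<open>A codeword \<open>x ^ i + x ^ j\<close> would give \<open>\<beta> ^ i = \<beta> ^ j\<close>, contradicting
  the order of \<open>\<beta>\<close>.\<close>
lemma hamming_weight_neq_2:
  fixes \<beta> :: "'a::field"
  assumes "CHAR('a) = 2" and "poly (map_poly bit_to G) \<beta> = 0" and "\<beta> \<noteq> 0"
    and order: "\<And>k. 0 < k \<Longrightarrow> k < n \<Longrightarrow> \<beta> ^ k \<noteq> 1"
    and "c \<in> cyclic_code n G"
  shows "hamming_weight c \<noteq> 2"
proof
  assume "hamming_weight c = 2"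
  then have "\<exists>i j. {k. coeff c k \<noteq> 0} = {i, j} \<and> i \<noteq> j"
    by (simp only: hamming_weight_def card_2_iff)
  then obtain i j where ij: "{k. coeff c k \<noteq> 0} = {i, j}" "i \<noteq> j"
    by blast
  have "i \<in> {k. coeff c k \<noteq> 0}" "j \<in> {k. coeff c k \<noteq> 0}"
    unfolding ij(1) by simp_all
  then have "coeff c i \<noteq> 0" "coeff c j \<noteq> 0"
    by (simp_all only: mem_Collect_eq not_False_eq_True)
  moreover have "G dvd c" "degree c < n"
    using assms(5) by (simp_all add: cyclic_code_def)
  ultimately have "i < n" "j < n"
    using le_degree[of c i] le_degree[of c j] by linarith+
  have "poly (map_poly bit_to c) \<beta> = 0"
    using \<open>G dvd c\<close> assms(2) by (rule poly_map_poly_bit_to_dvd_root[OF assms(1)])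
  then have "\<beta> ^ i = \<beta> ^ j"
    using ij by (simp add: poly_map_poly_bit_to add_eq_0_iff2 uminus_CHAR_2[OF assms(1)])
  have "\<beta> ^ (b - a) = 1" if "a < b" "\<beta> ^ a = \<beta> ^ b" for a b
    using that assms(3) by (simp add: power_diff)
  then show False
    using order \<open>\<beta> ^ i = \<beta> ^ j\<close> \<open>i \<noteq> j\<close> \<open>i < n\<close> \<open>j < n\<close>
    by (metis diff_less_mono2 less_imp_diff_less linorder_neqE_nat zero_less_diff)
qed

lemma hamming_weight_ge_4:
  fixes \<beta> :: "'a::field"
  assumes "CHAR('a) = 2" and "[:-1, 1:] dvd G" and "poly (map_poly bit_to G) \<beta> = 0" and "\<beta> \<noteq> 0"
    and "\<And>k. 0 < k \<Longrightarrow> k < n \<Longrightarrow> \<beta> ^ k \<noteq> 1"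
    and "c \<in> cyclic_code n G" "c \<noteq> 0"
  shows "4 \<le> hamming_weight c"
proof -
  have "G dvd c"
    using assms(6) by (simp add: cyclic_code_def)
  then have "even (hamming_weight c)"
    by (rule even_hamming_weight[OF dvd_trans[OF assms(2)]])
  moreover have "hamming_weight c \<noteq> 2"
    using assms(1,3-6) by (rule hamming_weight_neq_2)
  moreover have "0 < hamming_weight c"
    using assms(7) by (rule hamming_weight_pos)
  ultimately show ?thesis
    by presburger
qed

definition poly_of_set :: "nat set \<Rightarrow> bit poly" where
  "poly_of_set S = (\<Sum>i\<in>S. monom 1 i)"

lemma coeff_poly_of_set: "finite S \<Longrightarrow> coeff (poly_of_set S) i = (if i \<in> S then 1 else 0)"
  by (simp add: poly_of_set_def coeff_sum coeff_monom)

lemma poly_of_set_diff: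
  assumes "S \<subseteq> {..<n}" "T \<subseteq> {..<n}" "S \<noteq> T"
  shows "poly_of_set S - poly_of_set T \<noteq> 0"
    and "degree (poly_of_set S - poly_of_set T) < n"
    and "hamming_weight (poly_of_set S - poly_of_set T) \<le> card S + card T"
proof -
  have "finite S" "finite T"
    using assms(1,2) finite_subset by blast+
  then have coeff: "coeff (poly_of_set S - poly_of_set T) i
      = (if i \<in> S then 1 else 0) - (if i \<in> T then 1 else 0)" for i
    by (simp add: coeff_poly_of_set)
  obtain i where "(i \<in> S) \<noteq> (i \<in> T)"
    using assms(3) by blast
  then have "coeff (poly_of_set S - poly_of_set T) i \<noteq> 0"
    unfolding coeff by auto
  then show "poly_of_set S - poly_of_set T \<noteq> 0"
    by auto
  have "0 < n"
    using assms \<open>(i \<in> S) \<noteq> (i \<in> T)\<close> by auto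
  moreover have "degree (poly_of_set S - poly_of_set T) \<le> n - 1"
  proof (rule degree_le, intro allI impI)
    fix j
    assume "n - 1 < j"
    then have "j \<notin> S" "j \<notin> T"
      using assms(1,2) by auto
    then show "coeff (poly_of_set S - poly_of_set T) j = 0"
      unfolding coeff by simp
  qed
  ultimately show "degree (poly_of_set S - poly_of_set T) < n"
    by linarith
  have "{i. coeff (poly_of_set S - poly_of_set T) i \<noteq> 0} \<subseteq> S \<union> T"
    unfolding coeff by auto
  then have "hamming_weight (poly_of_set S - poly_of_set T) \<le> card (S \<union> T)"
    unfolding hamming_weight_def using \<open>finite S\<close> \<open>finite T\<close> by (intro card_mono) auto
  also have "\<dots> \<le> card S + card T"
    by (rule card_Un_le)
  finally show "hamming_weight (poly_of_set S - poly_of_set T) \<le> card S + card T" .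
qed

text \<open>Pigeonhole: two distinct words \<open>poly_of_set S\<close>, \<open>poly_of_set T\<close> of weight
  \<open>k\<close> have the same residue modulo \<open>G\<close>.\<close>
lemma exists_low_weight_codeword:
  assumes "0 < degree G" and "2 ^ degree G < n choose k"
  shows "\<exists>c\<in>cyclic_code n G. c \<noteq> 0 \<and> hamming_weight c \<le> 2 * k"
proof -
  define X where "X = {S. S \<subseteq> {..<n} \<and> card S = k}"
  have "degree (p mod G) < degree G" for p
    using assms(1) by (cases "p mod G = 0") (auto intro: degree_mod_less')
  then have "(\<lambda>S. poly_of_set S mod G) ` X \<subseteq> {q. degree q < degree G}"
    by auto
  moreover have "card X = n choose k"
    unfolding X_def by (simp add: n_subsets)
  ultimately have "\<not> inj_on (\<lambda>S. poly_of_set S mod G) X"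
    using card_poly_degree_less[where 'a = bit, OF finite_UNIV_bit assms(1)] assms(2)
    by (metis card_UNIV_bit card_inj_on_le not_le)
  then obtain S T where "S \<in> X" "T \<in> X" "S \<noteq> T" "poly_of_set S mod G = poly_of_set T mod G"
    unfolding inj_on_def by blast
  then have ST: "S \<subseteq> {..<n}" "T \<subseteq> {..<n}" "S \<noteq> T" "card S = k" "card T = k"
    and "G dvd poly_of_set S - poly_of_set T"
    by (simp_all add: X_def mod_eq_dvd_iff)
  show ?thesis
  proof
    show "poly_of_set S - poly_of_set T \<in> cyclic_code n G"
      using poly_of_set_diff(2)[OF ST(1-3)] \<open>G dvd _\<close> by (simp add: cyclic_code_def)
    show "poly_of_set S - poly_of_set T \<noteq> 0 \<and> hamming_weight (poly_of_set S - poly_of_set T) \<le> 2 * k"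
      using poly_of_set_diff(1,3)[OF ST(1-3)] ST(4,5) by simp
  qed
qed

lemma three_times_plus_2_less_two_power: "4 \<le> m \<Longrightarrow> 3 * m + 2 < (2::nat) ^ m"
proof (induction m rule: nat_induct_at_least)
  case (Suc m)
  then show ?case
    by simp
qed simp

lemma choose_4_eq: "24 * (n choose 4) = n * (n - 1) * (n - 2) * (n - 3)"
proof -
  have e1: "4 * (n choose 4) = n * ((n - 1) choose 3)"
    using times_binomial_minus1_eq[of 4 n] by (simp add: numeral_eq_Suc)
  have e2: "3 * ((n - 1) choose 3) = (n - 1) * ((n - 2) choose 2)"
    using times_binomial_minus1_eq[of 3 "n - 1"] by (simp add: numeral_2_eq_2 numeral_3_eq_3)
  have e3: "2 * ((n - 2) choose 2) = (n - 2) * (n - 3)"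
    using times_binomial_minus1_eq[of 2 "n - 2"] by (simp add: numeral_2_eq_2 numeral_3_eq_3)
  have "24 * (n choose 4) = 6 * (4 * (n choose 4))"
    by simp
  also have "\<dots> = 2 * n * (3 * ((n - 1) choose 3))"
    unfolding e1 by simp
  also have "\<dots> = n * (n - 1) * (2 * ((n - 2) choose 2))"
    unfolding e2 by simp
  also have "\<dots> = n * (n - 1) * (n - 2) * (n - 3)"
    unfolding e3 by simp
  finally show ?thesis .
qed

lemma two_power_less_choose_4:
  assumes "7 \<le> m"
  shows "2 ^ (3 * m + 1) < (2 ^ m - 1) choose 4"
proof -
  define x where "x = (2::nat) ^ m - 4"
  have "(2::nat) ^ 7 \<le> 2 ^ m"
    using assms by (intro power_increasing) simp_all
  then have "124 \<le> x" and two_power: "2 ^ m = x + 4"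
    by (simp_all add: x_def)
  have "(4 * (x + 4)) ^ 3 \<le> (5 * x) ^ 3"
    using \<open>124 \<le> x\<close> by (intro power_mono) simp_all
  then have "4 ^ 3 * (x + 4) ^ 3 \<le> 5 ^ 3 * x ^ 3"
    by (simp only: power_mult_distrib)
  then have "64 * (x + 4) ^ 3 \<le> 125 * x ^ 3"
    by simp
  moreover have "6000 * x ^ 3 < 64 * x * x ^ 3"
    using \<open>124 \<le> x\<close> by (intro mult_strict_right_mono) simp_all
  ultimately have "48 * (x + 4) ^ 3 < x * x ^ 3"
    by linarith
  also have "x * x ^ 3 = x * x * x * x"
    by (simp add: power3_eq_cube)
  also have "\<dots> \<le> (x + 3) * (x + 2) * (x + 1) * x"
    by (intro mult_mono) simp_all
  also have "\<dots> = 24 * ((x + 3) choose 4)"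
    by (simp add: choose_4_eq)
  finally have "48 * (x + 4) ^ 3 < 24 * ((2 ^ m - 1) choose 4)"
    using two_power by (simp add: add.commute)
  moreover have "24 * 2 ^ (3 * m + 1) = 48 * (x + 4) ^ 3"
    by (simp flip: two_power add: power_mult mult.commute)
  ultimately show ?thesis
    by linarith
qed

lemma coprime_3_two_power_minus_1:
  assumes "odd m"
  shows "coprime 3 (2 ^ m - 1 :: nat)"
proof -
  obtain h where "m = 2 * h + 1"
    using assms oddE by blast
  have "[4 ^ h = 1 ^ h] (mod 3 :: nat)"
    by (intro cong_pow) (simp add: cong_def)
  then have "[2 * 4 ^ h - 1 = 2 * 1 ^ h - 1] (mod 3 :: nat)"
    by (intro cong_diff_nat cong_mult cong_refl) simp_all
  moreover have "(2::nat) ^ m = 2 * 4 ^ h"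
    by (simp add: \<open>m = 2 * h + 1\<close> power_mult)
  ultimately have "(2 ^ m - 1) mod 3 = (1::nat)"
    by (simp add: cong_def)
  then have "coprime 3 ((2 ^ m - 1) mod 3 :: nat)"
    by simp
  then show ?thesis
    by (simp only: coprime_mod_right_iff zero_neq_numeral not_False_eq_True)
qed

context binary_field
begin

lemma hamming_weight_ge_4_if_zeros_1_and_inverse_alpha_cube:
  assumes "odd m" and "[:-1, 1:] * min_poly_F2 (inverse (\<alpha> ^ 3)) dvd G"
    and "c \<in> cyclic_code n G" "c \<noteq> 0"
  shows "4 \<le> hamming_weight c"
proof (rule hamming_weight_ge_4[OF CHAR_eq_2 _ _ _ _ assms(3,4)])
  show "[:-1, 1:] dvd G"
    using assms(2) by (rule dvd_mult_left)
  have "min_poly_F2 (inverse (\<alpha> ^ 3)) dvd G"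
    using assms(2) by (rule dvd_mult_right)
  moreover have "poly (map_poly bit_to (min_poly_F2 (inverse (\<alpha> ^ 3)))) (inverse (\<alpha> ^ 3)) = 0"
    using min_poly_F2_root[of _ 0] by simp
  ultimately show "poly (map_poly bit_to G) (inverse (\<alpha> ^ 3)) = 0"
    by (rule poly_map_poly_bit_to_dvd_root[OF CHAR_eq_2])
  show "inverse (\<alpha> ^ 3) \<noteq> 0"
    using alpha_nonzero by simp
  show "inverse (\<alpha> ^ 3) ^ k \<noteq> 1" if "0 < k" "k < n" for k
    using inverse_alpha_power_power_neq_1 coprime_3_two_power_minus_1[OF assms(1)] that
    by (simp add: n_def)
qed

end

theorem theorem2:
  fixes m h :: nat and \<alpha> :: "'a::{finite,field}"
  assumes "m = 2 * h + 1" and "m \<ge> 7"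
    and "card (UNIV :: 'a set) = 2 ^ m"
    and "primitive_elem \<alpha>"
  defines "s \<equiv> trace_seq m (f2 h) \<alpha>"
    and "v \<equiv> 2 ^ m - 1"
  shows "seq_min_poly s =
           [:-1, 1:] * min_poly_F2 (inverse (\<alpha> ^ 3))
             * min_poly_F2 (inverse (\<alpha> ^ (1 + 2 ^ (h - 1))))
             * min_poly_F2 (inverse (\<alpha> ^ (1 + 2 ^ (h - 1) + 2 ^ h)))
         \<and> linear_span s = 3 * m + 1
         \<and> code_dim (cyclic_code v (seq_min_poly s)) = 2 ^ m - 2 - 3 * m
         \<and> 4 \<le> min_distance (cyclic_code v (seq_min_poly s))
         \<and> min_distance (cyclic_code v (seq_min_poly s)) \<le> 8"
proof -
  interpret binary_field m \<alpha> v
    using assms(3,4) by unfold_locales (simp_all add: v_def)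
  define G where "G = seq_min_poly s"
  have G: "G = [:-1, 1:] * min_poly_F2 (inverse (\<alpha> ^ 3))
             * min_poly_F2 (inverse (\<alpha> ^ (1 + 2 ^ (h - 1))))
             * min_poly_F2 (inverse (\<alpha> ^ (1 + 2 ^ (h - 1) + 2 ^ h)))" "degree G = 3 * m + 1"
    using seq_min_poly_trace_seq_f2[OF assms(1)] assms(1,2) by (simp_all add: G_def s_def)
  have "G \<noteq> 0" "degree G < v"
    using G(2) three_times_plus_2_less_two_power[of m] assms(2) by (auto simp: v_def)
  have "[:-1, 1:] * min_poly_F2 (inverse (\<alpha> ^ 3)) dvd G"
    unfolding G(1) by (intro dvd_mult2 dvd_refl)
  then have "4 \<le> hamming_weight c" if "c \<in> cyclic_code v G" "c \<noteq> 0" for c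
    using hamming_weight_ge_4_if_zeros_1_and_inverse_alpha_cube assms(1) that by simp
  moreover have "\<exists>c\<in>cyclic_code v G. c \<noteq> 0 \<and> hamming_weight c \<le> 2 * 4"
    using G(2) two_power_less_choose_4[OF assms(2)]
    by (intro exists_low_weight_codeword) (simp_all add: v_def)
  ultimately have "4 \<le> min_distance (cyclic_code v G) \<and> min_distance (cyclic_code v G) \<le> 8"
    using finite_cyclic_code[OF \<open>G \<noteq> 0\<close> \<open>degree G < v\<close>] by (intro min_distance_bounds) auto
  then show ?thesis
    using G code_dim_cyclic_code[OF \<open>G \<noteq> 0\<close> \<open>degree G < v\<close>]
    by (simp add: G_def linear_span_def v_def)
qed

end
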